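(* Let $n\geq 2$ and let $r$ be a positive integer. Let $X^n_r$ be the blow-up of $(\mathbb P^1)^n$ at $r$ points in very general position. Then the pseudoeffective cone $\overline{\mathrm{Eff}}_{n-1}(X^n_r)$ is fiber-generated if and only if $r\leq 2$.
   Context: Work over $\mathbb C$. For a smooth projective variety $X$ of dimension $n$, $N_k(X)$ denotes the real vector space of numerical equivalence classes of $k$-dimensional cycles (tensored with $\mathbb R$), and $\overline{\mathrm{Eff}}_k(X)\subseteq N_k(X)$ is the closure of the cone spanned by classes of $k$-dimensional subvarieties. Let $\pi: X^n_r\to(\mathbb P^1)^n$ be the blow-up at $r$ very general points $q_1,\dots,q_r$ (i.e. their configuration lies outside a countable union of proper closed subsets), with exceptional divisors $E_1,\dots,E_r$, each isomorphic to $\mathbb P^{n-1}$. For $I\subseteq\{1,\dots,n\}$ with $|I|=n-k$, let $p_I:(\mathbb P^1)^n\to(\mathbb P^1)^{n-k}$ be the projection onto the coordinates indexed by $I$, and let $H_I\in N_k(X^n_r)$ be the class of the pullback under $\pi$ of a fiber of $p_I$. Let $E_{j,k}\in N_k(X^n_r)$ be the class of a $k$-dimensional linear subspace of $E_j\cong\mathbb P^{n-1}$. The cone of fibers $\mathrm{CF}_k(X^n_r)$ is the cone generated by the classes $H_I-E_{i,k}$ ($|I|=n-k$, $1\le i\le r$) and $E_{i,k}$ ($1\le i\le r$). The cone $\overline{\mathrm{Eff}}_k(X^n_r)$ is called fiber-generated if $\overline{\mathrm{Eff}}_k(X^n_r)=\mathrm{CF}_k(X^n_r)$. *)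

theory Defs
  imports "HOL-Analysis.Analysis"
begin

(* Multivariate polynomials over C, given by a finite set S of exponent vectors
   (supported on the variable set V) and coefficients c. *)
definition mpoly_nonzero :: "'v set \<Rightarrow> ('v \<Rightarrow> nat) set \<Rightarrow> (('v \<Rightarrow> nat) \<Rightarrow> complex) \<Rightarrow> bool" where
  "mpoly_nonzero V S c \<longleftrightarrow> finite V \<and> finite S \<and> (\<forall>e\<in>S. \<forall>v. v \<notin> V \<longrightarrow> e v = 0) \<and> (\<exists>e\<in>S. c e \<noteq> 0)"

definition mpoly_eval :: "'v set \<Rightarrow> ('v \<Rightarrow> nat) set \<Rightarrow> (('v \<Rightarrow> nat) \<Rightarrow> complex) \<Rightarrow> ('v \<Rightarrow> complex) \<Rightarrow> complex" where
  "mpoly_eval V S c x = (\<Sum>e\<in>S. c e * (\<Prod>v\<in>V. x v ^ e v))"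

(* P holds for very general x in C^V: outside a countable union of proper
   Zariski-closed subsets (each contained in a hypersurface {f = 0}, f nonzero). *)
definition very_general :: "'v set \<Rightarrow> (('v \<Rightarrow> complex) \<Rightarrow> bool) \<Rightarrow> bool" where
  "very_general V P \<longleftrightarrow>
     (\<exists>F. countable F \<and> (\<forall>(S, c)\<in>F. mpoly_nonzero V S c) \<and>
          (\<forall>x. (\<forall>(S, c)\<in>F. mpoly_eval V S c x \<noteq> 0) \<longrightarrow> P x))"

(* exponent vectors of monomials of multidegree \<le> a in variables x_0..x_{n-1}
   (affine chart of (P^1)^n; such polynomials = multihomogeneous forms of multidegree a) *)
definition exps :: "nat \<Rightarrow> (nat \<Rightarrow> nat) \<Rightarrow> (nat \<Rightarrow> nat) set" where
  "exps n a = {e. (\<forall>j<n. e j \<le> a j) \<and> (\<forall>j\<ge>n. e j = 0)}"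

definition hasse :: "nat \<Rightarrow> (nat \<Rightarrow> nat) \<Rightarrow> ((nat \<Rightarrow> nat) \<Rightarrow> complex) \<Rightarrow> (nat \<Rightarrow> nat) \<Rightarrow> (nat \<Rightarrow> complex) \<Rightarrow> complex" where
  "hasse n a c beta p =
     (\<Sum>e\<in>exps n a. c e * (\<Prod>j<n. of_nat (e j choose beta j) * p j ^ (e j - beta j)))"

definition mult_ge :: "nat \<Rightarrow> (nat \<Rightarrow> nat) \<Rightarrow> ((nat \<Rightarrow> nat) \<Rightarrow> complex) \<Rightarrow> (nat \<Rightarrow> complex) \<Rightarrow> nat \<Rightarrow> bool" where
  "mult_ge n a c p m \<longleftrightarrow>
     (\<forall>beta. (\<forall>j\<ge>n. beta j = 0) \<and> (\<Sum>j<n. beta j) < m \<longrightarrow> hasse n a c beta p = 0)"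

(* N_{n-1}(X^n_r) = N^1(X^n_r) identified with vectors v :: nat \<Rightarrow> real:
   coordinate j (j<n) = coefficient of H_j, coordinate n+i (i<r) = coefficient of E_i,
   other coordinates 0. *)
definition unitv :: "nat \<Rightarrow> nat \<Rightarrow> real" where
  "unitv k = (\<lambda>l. if l = k then 1 else 0)"

definition gen_cone :: "(nat \<Rightarrow> real) set \<Rightarrow> (nat \<Rightarrow> real) set" where
  "gen_cone G = {v. \<exists>T w. finite T \<and> T \<subseteq> G \<and> (\<forall>g\<in>T. 0 \<le> w g) \<and>
                        v = (\<lambda>k. \<Sum>g\<in>T. w g * g k)}"

(* classes of effective divisors on the blow-up of (P^1)^n at the points
   q_i = (x(i,0),...,x(i,n-1)), i<r: the E_i, and the classes
   sum_j a_j H_j - sum_i m_i E_i of (total transforms minus exceptional parts of)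
   hypersurfaces of multidegree a with multiplicity \<ge> m_i at q_i. *)
definition eff_gens :: "nat \<Rightarrow> nat \<Rightarrow> (nat \<times> nat \<Rightarrow> complex) \<Rightarrow> (nat \<Rightarrow> real) set" where
  "eff_gens n r x =
     {unitv (n + i) | i. i < r} \<union>
     {v. \<exists>a m c. (\<exists>e\<in>exps n a. c e \<noteq> 0) \<and>
                 (\<forall>i<r. mult_ge n a c (\<lambda>j. x (i, j)) (m i)) \<and>
                 v = (\<lambda>k. if k < n then real (a k)
                          else if k < n + r then - real (m (k - n)) else 0)}"

definition pseff :: "nat \<Rightarrow> nat \<Rightarrow> (nat \<times> nat \<Rightarrow> complex) \<Rightarrow> (nat \<Rightarrow> real) set" where
  "pseff n r x = closure (gen_cone (eff_gens n r x))"

definition cone_fibers :: "nat \<Rightarrow> nat \<Rightarrow> (nat \<Rightarrow> real) set" where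
  "cone_fibers n r = gen_cone
     ({unitv (n + i) | i. i < r} \<union>
      {(\<lambda>k. unitv j k - unitv (n + i) k) | j i. j < n \<and> i < r})"

definition fiber_generated :: "nat \<Rightarrow> nat \<Rightarrow> (nat \<times> nat \<Rightarrow> complex) \<Rightarrow> bool" where
  "fiber_generated n r x \<longleftrightarrow> pseff n r x = cone_fibers n r"

end

(*
  Very general position is only used through one property: any two of the points differ in
  every coordinate.  Under it, a form of multidegree a vanishing to order m1 at p and to order
  m2 at q satisfies m1 + m2 <= a_1 + ... + a_n.  Indeed, restrict the form to a rational curve
  of multidegree (1,...,1) through p, through q and through a point where the form does not
  vanish: the restriction is a nonzero polynomial in the curve parameter t, divisible by t^m1
  (Taylor expansion at p, t = 0) and of degree at most a_1 + ... + a_n - m2 (Taylor expansion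
  at q, t = infinity).

  For r <= 2 this puts every effective class sum a_j H_j - sum m_i E_i into the closed cone cut
  out by v(H_j) >= 0 and sum_j v(H_j) + sum_(i in S) v(E_i) >= 0 for all sets S of exceptional
  divisors, and that cone is exactly the cone of fibers.  For r >= 3 the (1,1)-form in the first
  two coordinates through three of the points has class H_1 + H_2 - E_1 - E_2 - E_3, which
  violates the inequality for S = {E_1, ..., E_r}.
*)

theory Submission
  imports Defs "HOL-Computational_Algebra.Polynomial"
begin

section \<open>Forms of bounded multidegree\<close>

lemma exps_0: "exps 0 a = {\<lambda>_. 0}"
  by (auto simp: exps_def)

lemma exps_Suc: "exps (Suc n) a = (\<lambda>(k, e). e(n := k)) ` ({..a n} \<times> exps n a)"
proof (intro set_eqI iffI)
  fix e assume e: "e \<in> exps (Suc n) a"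
  then have "(e n, e(n := 0)) \<in> {..a n} \<times> exps n a"
    by (auto simp: exps_def)
  moreover have "e = (\<lambda>(k, e). e(n := k)) (e n, e(n := 0))" by simp
  ultimately show "e \<in> (\<lambda>(k, e). e(n := k)) ` ({..a n} \<times> exps n a)" by blast
qed (auto simp: exps_def less_Suc_eq)

lemma inj_on_exps_Suc: "inj_on (\<lambda>(k, e). e(n := k)) ({..a n} \<times> exps n a)"
proof (rule inj_onI, clarify)
  fix k e k' e'
  assume "e \<in> exps n a" "e' \<in> exps n a" and eq: "e(n := k) = e'(n := k')"
  then have "e n = e' n" by (simp add: exps_def)
  with eq show "k = k' \<and> e = e'" by (metis fun_upd_triv fun_upd_upd fun_upd_eqD)
qed

lemma finite_exps: "finite (exps n a)"
  by (induction n) (simp_all add: exps_0 exps_Suc)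

lemma sum_exps_Suc:
  "(\<Sum>e\<in>exps (Suc n) a. F e) = (\<Sum>k\<le>a n. \<Sum>e\<in>exps n a. F (e(n := k)))"
  unfolding exps_Suc sum.reindex[OF inj_on_exps_Suc] sum.cartesian_product
  by (simp add: split_beta)

lemma prod_sum_eq_sum_exps:
  fixes f :: "nat \<Rightarrow> nat \<Rightarrow> 'a::comm_semiring_1"
  shows "(\<Prod>j<n. \<Sum>k\<le>a j. f j k) = (\<Sum>b\<in>exps n a. \<Prod>j<n. f j (b j))"
proof (induction n)
  case 0
  then show ?case by (simp add: exps_0)
next
  case (Suc n)
  have "(\<Prod>j<Suc n. \<Sum>k\<le>a j. f j k) = (\<Sum>k\<le>a n. \<Sum>b\<in>exps n a. (\<Prod>j<n. f j (b j)) * f n k)"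
    by (simp add: Suc sum_distrib_left sum_distrib_right sum.swap[where A = "exps n a"])
  also have "\<dots> = (\<Sum>b\<in>exps (Suc n) a. \<Prod>j<Suc n. f j (b j))"
    unfolding sum_exps_Suc
  proof (intro sum.cong refl)
    fix k b
    have "(\<Prod>j<n. f j ((b(n := k)) j)) = (\<Prod>j<n. f j (b j))"
      by (intro prod.cong) auto
    then show "(\<Prod>j<n. f j (b j)) * f n k = (\<Prod>j<Suc n. f j ((b(n := k)) j))"
      by simp
  qed
  finally show ?case .
qed

lemma binomial_ring_homogenized:
  fixes P U W :: "'a::comm_semiring_1"
  assumes "e \<le> a"
  shows "(P * U + W) ^ e * U ^ (a - e) =
    (\<Sum>k\<le>a. of_nat (e choose k) * P ^ (e - k) * W ^ k * U ^ (a - k))"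
proof -
  have "(P * U + W) ^ e * U ^ (a - e) =
      (\<Sum>k\<le>e. of_nat (e choose k) * W ^ k * (P * U) ^ (e - k) * U ^ (a - e))"
    by (simp add: binomial_ring[of W "P * U" e] add.commute sum_distrib_right)
  also have "\<dots> = (\<Sum>k\<le>e. of_nat (e choose k) * P ^ (e - k) * W ^ k * U ^ (a - k))"
  proof (intro sum.cong refl)
    fix k assume "k \<in> {..e}"
    then have "a - k = (e - k) + (a - e)" using assms by auto
    then show "of_nat (e choose k) * W ^ k * (P * U) ^ (e - k) * U ^ (a - e) =
        of_nat (e choose k) * P ^ (e - k) * W ^ k * U ^ (a - k)"
      by (simp add: power_add power_mult_distrib mult_ac)
  qed
  also have "\<dots> = (\<Sum>k\<le>a. of_nat (e choose k) * P ^ (e - k) * W ^ k * U ^ (a - k))"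
    using assms by (intro sum.mono_neutral_left) (auto simp: binomial_eq_0 not_le)
  finally show ?thesis .
qed

(* For C the coefficients of a form and P a point, the inner sum is the Hasse derivative of
   order b at P (see hasse_to_poly): this is Taylor expansion at P in homogeneous coordinates. *)
lemma taylor_homogenized:
  fixes C :: "(nat \<Rightarrow> nat) \<Rightarrow> 'a::comm_semiring_1" and P U W :: "nat \<Rightarrow> 'a"
  shows "(\<Sum>e\<in>exps n a. C e * (\<Prod>j<n. (P j * U j + W j) ^ e j * U j ^ (a j - e j))) =
    (\<Sum>b\<in>exps n a. (\<Sum>e\<in>exps n a. C e * (\<Prod>j<n. of_nat (e j choose b j) * P j ^ (e j - b j)))
        * (\<Prod>j<n. W j ^ b j * U j ^ (a j - b j)))"
proof -
  have "(\<Prod>j<n. (P j * U j + W j) ^ e j * U j ^ (a j - e j)) =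
      (\<Sum>b\<in>exps n a. (\<Prod>j<n. of_nat (e j choose b j) * P j ^ (e j - b j)) *
         (\<Prod>j<n. W j ^ b j * U j ^ (a j - b j)))" if "e \<in> exps n a" for e
  proof -
    have "(\<Prod>j<n. (P j * U j + W j) ^ e j * U j ^ (a j - e j)) =
        (\<Prod>j<n. \<Sum>k\<le>a j. of_nat (e j choose k) * P j ^ (e j - k) * W j ^ k * U j ^ (a j - k))"
      using that by (intro prod.cong refl binomial_ring_homogenized) (auto simp: exps_def)
    also have "\<dots> = (\<Sum>b\<in>exps n a. \<Prod>j<n. of_nat (e j choose b j) * P j ^ (e j - b j) *
        W j ^ b j * U j ^ (a j - b j))"
      by (rule prod_sum_eq_sum_exps)
    finally show ?thesis by (simp add: prod.distrib mult.assoc)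
  qed
  then have "(\<Sum>e\<in>exps n a. C e * (\<Prod>j<n. (P j * U j + W j) ^ e j * U j ^ (a j - e j))) =
      (\<Sum>e\<in>exps n a. \<Sum>b\<in>exps n a. C e * (\<Prod>j<n. of_nat (e j choose b j) * P j ^ (e j - b j)) *
         (\<Prod>j<n. W j ^ b j * U j ^ (a j - b j)))"
    by (simp add: sum_distrib_left mult.assoc)
  also have "\<dots> = (\<Sum>b\<in>exps n a. (\<Sum>e\<in>exps n a. C e * (\<Prod>j<n. of_nat (e j choose b j) * P j ^ (e j - b j)))
        * (\<Prod>j<n. W j ^ b j * U j ^ (a j - b j)))"
    by (subst sum.swap) (simp add: sum_distrib_right)
  finally show ?thesis .
qed

definition form_eval :: "nat \<Rightarrow> (nat \<Rightarrow> nat) \<Rightarrow> ((nat \<Rightarrow> nat) \<Rightarrow> complex) \<Rightarrow> (nat \<Rightarrow> complex) \<Rightarrow> complex"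
  where "form_eval n a c z = (\<Sum>e\<in>exps n a. c e * (\<Prod>j<n. z j ^ e j))"

lemma form_eval_prod_coeffs:
  "form_eval n a (\<lambda>b. \<Prod>j<n. f j (b j)) z = (\<Prod>j<n. \<Sum>k\<le>a j. f j k * z j ^ k)"
  unfolding form_eval_def prod_sum_eq_sum_exps by (simp add: prod.distrib)

lemma form_eval_linear_comb:
  "form_eval n a (\<lambda>e. A * c e + B * d e) z = A * form_eval n a c z + B * form_eval n a d z"
  by (simp add: form_eval_def sum.distrib sum_distrib_left algebra_simps)

lemma coeff_nonzero_if_form_eval_nonzero:
  "form_eval n a c z \<noteq> 0 \<Longrightarrow> \<exists>e\<in>exps n a. c e \<noteq> 0"
  unfolding form_eval_def by (metis (no_types, lifting) mult_eq_0_iff sum.neutral)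

definition linear_product :: "nat \<Rightarrow> (nat \<Rightarrow> nat) \<Rightarrow> (nat \<Rightarrow> complex) \<Rightarrow> (nat \<Rightarrow> nat) \<Rightarrow> complex" where
  "linear_product n a w b = (\<Prod>l<n. if b l < a l then - w l else 1)"

lemma form_eval_linear_product:
  assumes "\<forall>l<n. a l \<le> 1"
  shows "form_eval n a (linear_product n a w) z = (\<Prod>l<n. (z l - w l) ^ a l)"
proof -
  have "(\<Sum>k\<le>a l. (if k < a l then - w l else 1) * z l ^ k) = (z l - w l) ^ a l" if "l < n" for l
    using assms that by (cases "a l") (auto simp: le_Suc_eq)
  then show ?thesis
    unfolding linear_product_def
    using form_eval_prod_coeffs[of n a "\<lambda>l k. if k < a l then - w l else 1" z] by simp
qed

lemma form_eval_Suc: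
  "form_eval (Suc n) a c (z(n := t)) = (\<Sum>k\<le>a n. form_eval n a (\<lambda>e. c (e(n := k))) z * t ^ k)"
  unfolding form_eval_def sum_exps_Suc sum_distrib_right
proof (intro sum.cong refl)
  fix k e
  have "(\<Prod>j<n. (z(n := t)) j ^ (e(n := k)) j) = (\<Prod>j<n. z j ^ e j)"
    by (intro prod.cong) auto
  then show "c (e(n := k)) * (\<Prod>j<Suc n. (z(n := t)) j ^ (e(n := k)) j) =
      c (e(n := k)) * (\<Prod>j<n. z j ^ e j) * t ^ k"
    by simp
qed

lemma form_eval_nonzero_avoiding:
  assumes "finite B" and "\<exists>e\<in>exps n a. c e \<noteq> 0"
  shows "\<exists>z. (\<forall>j<n. z j \<notin> B) \<and> form_eval n a c z \<noteq> 0"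
  using assms(2)
proof (induction n arbitrary: c)
  case 0
  then show ?case by (auto simp: form_eval_def exps_0)
next
  case (Suc n)
  then obtain e where e: "e \<in> exps (Suc n) a" "c e \<noteq> 0" by blast
  have "e(n := 0) \<in> exps n a" "(e(n := 0))(n := e n) = e"
    using e(1) by (auto simp: exps_def less_Suc_eq)
  then obtain z where z: "\<forall>j<n. z j \<notin> B" "form_eval n a (\<lambda>e'. c (e'(n := e n))) z \<noteq> 0"
    using Suc.IH[of "\<lambda>e'. c (e'(n := e n))"] e(2) by metis
  define Q where "Q = (\<Sum>k\<le>a n. monom (form_eval n a (\<lambda>e'. c (e'(n := k))) z) k)"
  have "e n \<le> a n" using e(1) by (simp add: exps_def)
  then have "coeff Q (e n) \<noteq> 0"
    using z(2) by (simp add: Q_def coeff_sum)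
  then have "Q \<noteq> 0" by auto
  then have "finite (B \<union> {t. poly Q t = 0})"
    using assms(1) poly_roots_finite by blast
  then obtain t where t: "t \<notin> B \<union> {t. poly Q t = 0}"
    using ex_new_if_finite[OF infinite_UNIV_char_0] by blast
  show ?case
  proof (intro exI conjI)
    show "\<forall>j<Suc n. (z(n := t)) j \<notin> B"
      using z(1) t by (simp add: less_Suc_eq)
    have "form_eval (Suc n) a c (z(n := t)) = poly Q t"
      by (simp add: form_eval_Suc Q_def poly_sum poly_monom)
    then show "form_eval (Suc n) a c (z(n := t)) \<noteq> 0"
      using t by simp
  qed
qed

section \<open>Multiplicities at two points\<close>

lemma hasse_to_poly:
  "(\<Sum>e\<in>exps n a. [:c e:] * (\<Prod>j<n. of_nat (e j choose b j) * [:p j:] ^ (e j - b j))) =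
    [:hasse n a c b p:]"
  by (simp add: hasse_def of_nat_poly poly_const_pow mult_to_poly prod_to_poly sum_to_poly mult_ac)

lemma hasse_eq_0_if_mult_ge:
  assumes "mult_ge n a c p m" "b \<in> exps n a" "(\<Sum>j<n. b j) < m"
  shows "hasse n a c b p = 0"
  using assms by (auto simp: mult_ge_def exps_def)

lemma mult_ge_0: "mult_ge n a c p 0"
  by (simp add: mult_ge_def)

lemma mult_ge_1_if_form_eval_eq_0:
  assumes "form_eval n a c p = 0"
  shows "mult_ge n a c p 1"
  unfolding mult_ge_def
proof (intro allI impI)
  fix \<beta> :: "nat \<Rightarrow> nat" assume "(\<forall>j\<ge>n. \<beta> j = 0) \<and> (\<Sum>j<n. \<beta> j) < 1"
  then have "\<beta> = (\<lambda>_. 0)"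
    by (auto simp: fun_eq_iff not_less[symmetric])
  then show "hasse n a c \<beta> p = 0"
    using assms by (simp add: hasse_def form_eval_def)
qed

lemma monomial_power_dvd_hasse_expansion:
  assumes "mult_ge n a c p m"
  shows "[:0, 1:] ^ m dvd
    (\<Sum>b\<in>exps n a. [:hasse n a c b p:] * (\<Prod>j<n. [:0, d j:] ^ b j * U j ^ (a j - b j)))"
proof (intro dvd_sum)
  fix b assume b: "b \<in> exps n a"
  show "[:0, 1:] ^ m dvd [:hasse n a c b p:] * (\<Prod>j<n. [:0, d j:] ^ b j * U j ^ (a j - b j))"
  proof (cases "(\<Sum>j<n. b j) < m")
    case True
    then show ?thesis using hasse_eq_0_if_mult_ge[OF assms b] by simp
  next
    case False
    have "[:0, 1:] ^ m dvd (\<Prod>j<n. [:0, 1:] ^ b j)"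
      using False by (simp add: le_imp_power_dvd power_sum[symmetric])
    also have "\<dots> dvd (\<Prod>j<n. [:0, d j:] ^ b j * U j ^ (a j - b j))"
    proof (intro prod_dvd_prod dvd_mult2 dvd_power_same)
      fix j
      have "[:0, d j:] = [:0, 1:] * [:d j:]" by simp
      then show "[:0, 1:] dvd [:0, d j:]" by (metis dvd_triv_left)
    qed
    finally show ?thesis by (rule dvd_mult)
  qed
qed

lemma degree_const_power_mult_le:
  assumes "degree U \<le> 1"
  shows "degree ([:d:] ^ b * U ^ k) \<le> k"
proof -
  have "degree ([:d:] ^ b * U ^ k) \<le> degree (U ^ k)"
    using degree_mult_le[of "[:d:] ^ b"] by (simp add: poly_const_pow)
  also have "\<dots> \<le> degree U * k"
    by (rule degree_power_le)
  also have "\<dots> \<le> k"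
    using assms by simp
  finally show ?thesis .
qed

lemma hasse_expansion_eq_0:
  assumes "mult_ge n a c q m" and "(\<Sum>j<n. a j) < m"
  shows "(\<Sum>b\<in>exps n a. [:hasse n a c b q:] * X b) = 0"
proof (intro sum.neutral ballI)
  fix b assume b: "b \<in> exps n a"
  then have "(\<Sum>j<n. b j) \<le> (\<Sum>j<n. a j)"
    by (intro sum_mono) (auto simp: exps_def)
  then show "[:hasse n a c b q:] * X b = 0"
    using hasse_eq_0_if_mult_ge[OF assms(1) b] assms(2) by simp
qed

lemma degree_hasse_expansion_le:
  fixes d :: "nat \<Rightarrow> complex" and U :: "nat \<Rightarrow> complex poly"
  assumes "mult_ge n a c q m" and "\<And>j. degree (U j) \<le> 1"
  shows "degree (\<Sum>b\<in>exps n a. [:hasse n a c b q:] * (\<Prod>j<n. [:d j:] ^ b j * U j ^ (a j - b j)))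
    \<le> (\<Sum>j<n. a j) - m"
proof (intro degree_sum_le finite_exps)
  fix b assume b: "b \<in> exps n a"
  show "degree ([:hasse n a c b q:] * (\<Prod>j<n. [:d j:] ^ b j * U j ^ (a j - b j))) \<le> (\<Sum>j<n. a j) - m"
  proof (cases "(\<Sum>j<n. b j) < m")
    case True
    then show ?thesis using hasse_eq_0_if_mult_ge[OF assms(1) b] by simp
  next
    case False
    have "degree (\<Prod>j<n. [:d j:] ^ b j * U j ^ (a j - b j)) \<le>
        (\<Sum>j<n. degree ([:d j:] ^ b j * U j ^ (a j - b j)))"
      using degree_prod_sum_le[of "{..<n}" "\<lambda>j. [:d j:] ^ b j * U j ^ (a j - b j)"] by (simp add: o_def)
    also have "\<dots> \<le> (\<Sum>j<n. a j - b j)"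
      using assms(2) by (intro sum_mono degree_const_power_mult_le)
    also have "\<dots> = (\<Sum>j<n. a j) - (\<Sum>j<n. b j)"
      using b by (intro sum_subtractf_nat) (auto simp: exps_def)
    also have "\<dots> \<le> (\<Sum>j<n. a j) - m"
      using False by simp
    finally show ?thesis
      by (simp add: order_trans[OF degree_smult_le])
  qed
qed

(* The form restricted to the curve t \<mapsto> ((p_j + q_j l_j t) / (1 + l_j t))_j, homogenised in t.
   The curve passes through p at t = 0 and through q at t = infinity. *)
definition curve_restriction ::
  "nat \<Rightarrow> (nat \<Rightarrow> nat) \<Rightarrow> ((nat \<Rightarrow> nat) \<Rightarrow> complex) \<Rightarrow> (nat \<Rightarrow> complex) \<Rightarrow> (nat \<Rightarrow> complex) \<Rightarrow>
    (nat \<Rightarrow> complex) \<Rightarrow> complex poly"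
  where "curve_restriction n a c p q l =
    (\<Sum>e\<in>exps n a. [:c e:] * (\<Prod>j<n. [:p j, q j * l j:] ^ e j * [:1, l j:] ^ (a j - e j)))"

lemma curve_restriction_expand_start:
  "curve_restriction n a c p q l =
    (\<Sum>b\<in>exps n a. [:hasse n a c b p:] * (\<Prod>j<n. [:0, (q j - p j) * l j:] ^ b j * [:1, l j:] ^ (a j - b j)))"
proof -
  have "[:p j, q j * l j:] = [:p j:] * [:1, l j:] + [:0, (q j - p j) * l j:]" for j
    by (simp add: algebra_simps)
  then have "curve_restriction n a c p q l = (\<Sum>e\<in>exps n a. [:c e:] *
      (\<Prod>j<n. ([:p j:] * [:1, l j:] + [:0, (q j - p j) * l j:]) ^ e j * [:1, l j:] ^ (a j - e j)))"
    by (simp only: curve_restriction_def)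
  then show ?thesis
    by (simp only: taylor_homogenized hasse_to_poly)
qed

lemma curve_restriction_expand_end:
  "curve_restriction n a c p q l =
    (\<Sum>b\<in>exps n a. [:hasse n a c b q:] * (\<Prod>j<n. [:p j - q j:] ^ b j * [:1, l j:] ^ (a j - b j)))"
proof -
  have "[:p j, q j * l j:] = [:q j:] * [:1, l j:] + [:p j - q j:]" for j
    by (simp add: algebra_simps)
  then have "curve_restriction n a c p q l = (\<Sum>e\<in>exps n a. [:c e:] *
      (\<Prod>j<n. ([:q j:] * [:1, l j:] + [:p j - q j:]) ^ e j * [:1, l j:] ^ (a j - e j)))"
    by (simp only: curve_restriction_def)
  then show ?thesis
    by (simp only: taylor_homogenized hasse_to_poly)
qed

lemma poly_curve_restriction_1:
  assumes "\<forall>j<n. z j \<noteq> q j"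
  shows "poly (curve_restriction n a c p q (\<lambda>j. (z j - p j) / (q j - z j))) 1 =
    (\<Prod>j<n. ((q j - p j) / (q j - z j)) ^ a j) * form_eval n a c z"
proof -
  define l where "l j = (z j - p j) / (q j - z j)" for j
  define R where "R j = (q j - p j) / (q j - z j)" for j
  have factor: "(p j + q j * l j) ^ e j * (1 + l j) ^ (a j - e j) = R j ^ a j * z j ^ e j"
    if "j < n" "e j \<le> a j" for j e
  proof -
    have "q j - z j \<noteq> 0" using assms that by auto
    then have "p j + q j * l j = z j * R j" and "1 + l j = R j"
      by (simp_all add: l_def R_def field_simps)
    then have "(p j + q j * l j) ^ e j * (1 + l j) ^ (a j - e j) =
        z j ^ e j * (R j ^ e j * R j ^ (a j - e j))"
      by (simp add: power_mult_distrib)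
    also have "R j ^ e j * R j ^ (a j - e j) = R j ^ a j"
      using that by (simp add: power_add[symmetric])
    finally show ?thesis by simp
  qed
  have "poly ([:c e:] * (\<Prod>j<n. [:p j, q j * l j:] ^ e j * [:1, l j:] ^ (a j - e j))) 1 =
      (\<Prod>j<n. R j ^ a j) * (c e * (\<Prod>j<n. z j ^ e j))" if "e \<in> exps n a" for e
  proof -
    have "poly ([:c e:] * (\<Prod>j<n. [:p j, q j * l j:] ^ e j * [:1, l j:] ^ (a j - e j))) 1 =
        c e * (\<Prod>j<n. (p j + q j * l j) ^ e j * (1 + l j) ^ (a j - e j))"
      by (simp add: poly_prod)
    also have "\<dots> = c e * (\<Prod>j<n. R j ^ a j * z j ^ e j)"
      using that factor by (simp add: exps_def)
    finally show ?thesis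
      by (simp add: prod.distrib)
  qed
  then show ?thesis
    unfolding curve_restriction_def form_eval_def poly_sum sum_distrib_left
      l_def[symmetric] R_def[symmetric]
    by (intro sum.cong refl)
qed

lemma mult_ge_add_le_degree:
  assumes "\<forall>j<n. p j \<noteq> q j" and "\<exists>e\<in>exps n a. c e \<noteq> 0"
    and "mult_ge n a c p m1" and "mult_ge n a c q m2"
  shows "m1 + m2 \<le> (\<Sum>j<n. a j)"
proof -
  obtain z where "\<forall>j<n. z j \<notin> q ` {..<n}" and z_nonroot: "form_eval n a c z \<noteq> 0"
    using form_eval_nonzero_avoiding[OF _ assms(2), of "q ` {..<n}"] by blast
  then have z_ne: "\<forall>j<n. z j \<noteq> q j" by blast
  define G where "G = curve_restriction n a c p q (\<lambda>j. (z j - p j) / (q j - z j))"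
  have "poly G 1 = (\<Prod>j<n. ((q j - p j) / (q j - z j)) ^ a j) * form_eval n a c z"
    unfolding G_def using z_ne by (rule poly_curve_restriction_1)
  moreover have "(\<Prod>j<n. ((q j - p j) / (q j - z j)) ^ a j) \<noteq> 0"
    using assms(1) z_ne by auto
  ultimately have "G \<noteq> 0"
    using z_nonroot by (metis mult_eq_0_iff poly_0)
  have "[:0, 1:] ^ m1 dvd G"
    unfolding G_def curve_restriction_expand_start
    using assms(3) by (rule monomial_power_dvd_hasse_expansion)
  then have "m1 \<le> degree G"
    by (metis degree_linear_power dvd_imp_degree_le \<open>G \<noteq> 0\<close>)
  moreover have "degree G \<le> (\<Sum>j<n. a j) - m2"
    unfolding G_def curve_restriction_expand_end using assms(4)
    by (rule degree_hasse_expansion_le) simp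
  moreover have "m2 \<le> (\<Sum>j<n. a j)"
  proof (rule ccontr)
    assume "\<not> m2 \<le> (\<Sum>j<n. a j)"
    then have "G = 0"
      unfolding G_def curve_restriction_expand_end using assms(4) by (intro hasse_expansion_eq_0) auto
    with \<open>G \<noteq> 0\<close> show False ..
  qed
  ultimately show ?thesis by linarith
qed

section \<open>The cone of fibers\<close>

lemma gen_cone_sum:
  assumes "finite I" and "\<And>i. i \<in> I \<Longrightarrow> g i \<in> G \<and> 0 \<le> c i"
  shows "(\<lambda>k. \<Sum>i\<in>I. c i * g i k) \<in> gen_cone G"
proof -
  define w where "w h = (\<Sum>i\<in>{i \<in> I. g i = h}. c i)" for h
  have "(\<Sum>h\<in>g ` I. w h * h k) = (\<Sum>i\<in>I. c i * g i k)" for k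
    unfolding w_def sum_distrib_right sum.image_gen[OF assms(1), of "\<lambda>i. c i * g i k" g]
    by (intro sum.cong refl) auto
  moreover have "\<forall>h\<in>g ` I. 0 \<le> w h"
    using assms(2) by (auto simp: w_def intro: sum_nonneg)
  ultimately show ?thesis
    unfolding gen_cone_def using assms by (intro CollectI exI[of _ "g ` I"] exI[of _ w]) auto
qed

lemma gen_cone_inc: "g \<in> G \<Longrightarrow> g \<in> gen_cone G"
  using gen_cone_sum[of "{()}" "\<lambda>_. g" G "\<lambda>_. 1"] by simp

lemma gen_cone_mono: "G \<subseteq> H \<Longrightarrow> gen_cone G \<subseteq> gen_cone H"
  unfolding gen_cone_def by blast

lemma gen_cone_add:
  assumes "u \<in> gen_cone G" and "v \<in> gen_cone G"
  shows "(\<lambda>k. u k + v k) \<in> gen_cone G"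
proof -
  obtain T w where T: "finite T" "T \<subseteq> G" "\<forall>g\<in>T. 0 \<le> w g" "u = (\<lambda>k. \<Sum>g\<in>T. w g * g k)"
    using assms(1) unfolding gen_cone_def by blast
  obtain T' w' where T': "finite T'" "T' \<subseteq> G" "\<forall>g\<in>T'. 0 \<le> w' g" "v = (\<lambda>k. \<Sum>g\<in>T'. w' g * g k)"
    using assms(2) unfolding gen_cone_def by blast
  have "(\<lambda>k. \<Sum>i\<in>T <+> T'. case_sum w w' i * case_sum id id i k) \<in> gen_cone G"
    using T T' by (intro gen_cone_sum) auto
  then show ?thesis
    using T(1,4) T'(1,4) by (simp add: sum.Plus o_def)
qed

lemma gen_cone_nonneg:
  assumes "finite K" and "\<And>g. g \<in> G \<Longrightarrow> 0 \<le> (\<Sum>k\<in>K. f k * g k)" and "v \<in> gen_cone G"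
  shows "0 \<le> (\<Sum>k\<in>K. f k * v k)"
proof -
  obtain T w where T: "finite T" "T \<subseteq> G" "\<forall>g\<in>T. 0 \<le> w g" "v = (\<lambda>k. \<Sum>g\<in>T. w g * g k)"
    using assms(3) unfolding gen_cone_def by blast
  have "(\<Sum>k\<in>K. f k * v k) = (\<Sum>g\<in>T. w g * (\<Sum>k\<in>K. f k * g k))"
    unfolding T(4) by (simp add: sum_distrib_left sum.swap[of _ K] mult_ac)
  also have "\<dots> \<ge> 0"
    using T(2,3) assms(2) by (intro sum_nonneg, intro mult_nonneg_nonneg) auto
  finally show ?thesis .
qed

definition fiber_inequalities :: "nat \<Rightarrow> nat \<Rightarrow> (nat \<Rightarrow> real) set" where
  "fiber_inequalities n r = {v. (\<forall>k\<ge>n + r. v k = 0) \<and> (\<forall>j<n. 0 \<le> v j) \<and>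
     (\<forall>S\<subseteq>{..<r}. 0 \<le> (\<Sum>j<n. v j) + (\<Sum>i\<in>S. v (n + i)))}"

lemma sum_lessThan_Un_image_add:
  fixes v :: "nat \<Rightarrow> real"
  assumes "finite S"
  shows "(\<Sum>k\<in>{..<n} \<union> (+) n ` S. v k) = (\<Sum>j<n. v j) + (\<Sum>i\<in>S. v (n + i))"
proof -
  have "(\<Sum>k\<in>(+) n ` S. v k) = (\<Sum>i\<in>S. v (n + i))"
    by (subst sum.reindex) (auto simp: inj_on_def)
  then show ?thesis
    using assms by (subst sum.union_disjoint) auto
qed

lemma closed_fiber_inequalities: "closed (fiber_inequalities n r)"
proof -
  have "fiber_inequalities n r =
      (\<Inter>k\<in>{n + r..}. {v. v k = 0}) \<inter> (\<Inter>j<n. {v. 0 \<le> v j}) \<inter>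
      (\<Inter>S\<in>Pow {..<r}. {v. 0 \<le> (\<Sum>j<n. v j) + (\<Sum>i\<in>S. v (n + i))})"
    unfolding fiber_inequalities_def by auto
  then show ?thesis
    by (simp add: closed_INT closed_Int closed_Collect_eq closed_Collect_le continuous_on_add
        continuous_on_sum)
qed

lemma gen_cone_subset_fiber_inequalities:
  assumes "G \<subseteq> fiber_inequalities n r"
  shows "gen_cone G \<subseteq> fiber_inequalities n r"
proof
  fix v assume v: "v \<in> gen_cone G"
  have G: "\<And>g. g \<in> G \<Longrightarrow> g \<in> fiber_inequalities n r"
    using assms by blast
  have "0 \<le> (\<Sum>k'\<in>{k}. 1 * v k')" and "0 \<le> (\<Sum>k'\<in>{k}. -1 * v k')" if "k \<ge> n + r" for k
    using that by (intro gen_cone_nonneg[OF _ _ v]; auto dest!: G simp: fiber_inequalities_def)+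
  then have "v k = 0" if "k \<ge> n + r" for k
    using that by fastforce
  moreover have "0 \<le> (\<Sum>k'\<in>{j}. 1 * v k')" if "j < n" for j
    using that by (intro gen_cone_nonneg[OF _ _ v]) (auto dest!: G simp: fiber_inequalities_def)
  moreover have "0 \<le> (\<Sum>j<n. v j) + (\<Sum>i\<in>S. v (n + i))" if "S \<subseteq> {..<r}" for S
  proof -
    have "finite S" using that finite_subset by blast
    have "0 \<le> (\<Sum>k\<in>{..<n} \<union> (+) n ` S. 1 * v k)"
      using that \<open>finite S\<close>
      by (intro gen_cone_nonneg[OF _ _ v]) (auto dest!: G simp: fiber_inequalities_def sum_lessThan_Un_image_add)
    then show ?thesis
      using sum_lessThan_Un_image_add[OF \<open>finite S\<close>] by simp
  qed
  ultimately show "v \<in> fiber_inequalities n r"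
    unfolding fiber_inequalities_def by auto
qed

definition fiber_gens :: "nat \<Rightarrow> nat \<Rightarrow> (nat \<Rightarrow> real) set" where
  "fiber_gens n r = {unitv (n + i) | i. i < r} \<union>
      {(\<lambda>k. unitv j k - unitv (n + i) k) | j i. j < n \<and> i < r}"

lemma cone_fibers_eq_gen_cone: "cone_fibers n r = gen_cone (fiber_gens n r)"
  unfolding cone_fibers_def fiber_gens_def ..

lemma fiber_gens_subset_fiber_inequalities: "fiber_gens n r \<subseteq> fiber_inequalities n r"
proof
  fix g assume "g \<in> fiber_gens n r"
  then consider (exceptional) i where "i < r" "g = unitv (n + i)"
    | (fiber) j i where "j < n" "i < r" "g = (\<lambda>k. unitv j k - unitv (n + i) k)"
    unfolding fiber_gens_def by blast
  then show "g \<in> fiber_inequalities n r"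
  proof cases
    case exceptional
    then show ?thesis
      by (auto simp: fiber_inequalities_def unitv_def intro!: sum_nonneg)
  next
    case fiber
    have "\<forall>k\<ge>n + r. g k = 0" "\<forall>l<n. 0 \<le> g l"
      using fiber by (auto simp: unitv_def)
    moreover have "0 \<le> (\<Sum>l<n. g l) + (\<Sum>i'\<in>S. g (n + i'))" if "S \<subseteq> {..<r}" for S
    proof -
      have "(\<Sum>l<n. g l) = 1"
        using fiber by (simp add: unitv_def)
      moreover have "(\<Sum>i'\<in>S. g (n + i')) = - (if i \<in> S then 1 else 0)"
        using fiber finite_subset[OF that] by (simp add: unitv_def sum_negf)
      ultimately show ?thesis by simp
    qed
    ultimately show ?thesis
      unfolding fiber_inequalities_def by blast
  qed
qed

lemma fiber_weights_exist:
  fixes A :: real and b :: "nat \<Rightarrow> real"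
  assumes "r \<ge> 1" and "\<forall>S\<subseteq>{..<r}. 0 \<le> A + (\<Sum>i\<in>S. b i)"
  shows "\<exists>\<theta>. (\<forall>i. 0 \<le> \<theta> i) \<and> (\<Sum>i<r. \<theta> i) = 1 \<and> (\<forall>i<r. 0 \<le> b i + A * \<theta> i)"
proof -
  define M where "M i = max 0 (- b i)" for i
  define Ms where "Ms = (\<Sum>i<r. M i)"
  have "0 \<le> A" using assms(2) by auto
  have "(\<Sum>i\<in>{i\<in>{..<r}. b i < 0}. b i) = (\<Sum>i<r. if b i < 0 then b i else 0)"
    by (rule sum.inter_filter) simp
  also have "\<dots> = - Ms"
    unfolding Ms_def M_def sum_negf[symmetric] by (intro sum.cong) auto
  finally have "(\<Sum>i\<in>{i\<in>{..<r}. b i < 0}. b i) = - Ms" .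
  moreover have "0 \<le> A + (\<Sum>i\<in>{i\<in>{..<r}. b i < 0}. b i)"
    by (rule assms(2)[rule_format]) auto
  ultimately have "Ms \<le> A" by linarith
  show ?thesis
  proof (cases "A = 0")
    case True
    have "0 \<le> b i" if "i < r" for i
      using assms(2)[rule_format, of "{i}"] that True by simp
    moreover have "(\<Sum>i<r. (if i = 0 then 1 else 0 :: real)) = 1"
      using assms(1) by simp
    ultimately show ?thesis
      using True by (intro exI[of _ "\<lambda>i. if i = 0 then 1 else 0"]) simp
  next
    case False
    with \<open>0 \<le> A\<close> have "A > 0" by simp
    define \<theta> where "\<theta> i = (M i + (if i = 0 then A - Ms else 0)) / A" for i
    have "(\<Sum>i<r. \<theta> i) = (\<Sum>i<r. M i + (if i = 0 then A - Ms else 0)) / A"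
      by (simp add: \<theta>_def sum_divide_distrib)
    also have "\<dots> = (Ms + (A - Ms)) / A"
      using assms(1) by (simp add: sum.distrib Ms_def)
    also have "\<dots> = 1"
      using \<open>A > 0\<close> by simp
    finally have "(\<Sum>i<r. \<theta> i) = 1" .
    moreover have "0 \<le> \<theta> i" for i
      using \<open>A > 0\<close> \<open>Ms \<le> A\<close> by (simp add: \<theta>_def M_def)
    moreover have "0 \<le> b i + A * \<theta> i" for i
      using \<open>A > 0\<close> \<open>Ms \<le> A\<close> by (simp add: \<theta>_def M_def max_def)
    ultimately show ?thesis
      by blast
  qed
qed

lemma sum_mult_unitv:
  assumes "finite J"
  shows "(\<Sum>j\<in>J. f j * unitv j k) = (if k \<in> J then f k else 0)"
proof -
  have "(\<Sum>j\<in>J. f j * unitv j k) = (\<Sum>j\<in>J. if j = k then f k else 0)"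
    by (intro sum.cong) (auto simp: unitv_def)
  then show ?thesis
    using assms by simp
qed

lemma fiber_inequalities_subset_cone_fibers:
  assumes "r \<ge> 1"
  shows "fiber_inequalities n r \<subseteq> cone_fibers n r"
proof
  fix v assume v: "v \<in> fiber_inequalities n r"
  define A where "A = (\<Sum>j<n. v j)"
  obtain \<theta> where \<theta>: "\<forall>i. 0 \<le> \<theta> i" "(\<Sum>i<r. \<theta> i) = 1" "\<forall>i<r. 0 \<le> v (n + i) + A * \<theta> i"
    using fiber_weights_exist[OF assms, of A "\<lambda>i. v (n + i)"] v
    by (auto simp: fiber_inequalities_def A_def)
  define E where "E k = (\<Sum>i<r. (v (n + i) + A * \<theta> i) * unitv (n + i) k)" for k
  define H where "H k = (\<Sum>(i, j)\<in>{..<r} \<times> {..<n}. (v j * \<theta> i) * (unitv j k - unitv (n + i) k))" for k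
  have "E \<in> gen_cone (fiber_gens n r)"
    unfolding E_def using \<theta>(3) by (intro gen_cone_sum) (auto simp: fiber_gens_def)
  moreover have "H \<in> gen_cone (fiber_gens n r)"
    unfolding H_def split_beta
    using v \<theta>(1) by (intro gen_cone_sum) (auto simp: fiber_gens_def fiber_inequalities_def)
  ultimately have "(\<lambda>k. E k + H k) \<in> cone_fibers n r"
    unfolding cone_fibers_eq_gen_cone by (rule gen_cone_add)
  moreover have "E k + H k = v k" for k
  proof -
    have "H k = (\<Sum>i<r. \<Sum>j<n. v j * \<theta> i * unitv j k) - (\<Sum>i<r. (\<Sum>j<n. v j) * \<theta> i * unitv (n + i) k)"
      unfolding H_def sum.cartesian_product[symmetric]
      by (simp add: right_diff_distrib sum_subtractf sum_distrib_right)
    also have "\<dots> = (\<Sum>i<r. if k < n then v k * \<theta> i else 0) - (\<Sum>i<r. A * \<theta> i * unitv (n + i) k)"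
      by (simp add: sum_mult_unitv[where f = "\<lambda>j. v j * _"] A_def)
    also have "\<dots> = (if k < n then v k else 0) - (\<Sum>i<r. A * \<theta> i * unitv (n + i) k)"
      using \<theta>(2) by (simp add: sum_distrib_left[symmetric])
    finally have "H k = (if k < n then v k else 0) - (\<Sum>i<r. A * \<theta> i * unitv (n + i) k)" .
    moreover have "E k = (\<Sum>i<r. v (n + i) * unitv (n + i) k) + (\<Sum>i<r. A * \<theta> i * unitv (n + i) k)"
      by (simp add: E_def distrib_right sum.distrib)
    moreover have "(\<Sum>i<r. v (n + i) * unitv (n + i) k) = (\<Sum>j\<in>{n..<n + r}. v j * unitv j k)"
      using sum.atLeastLessThan_shift_bounds[of "\<lambda>j. v j * unitv j k" 0 n r]
      by (simp add: atLeast0LessThan add.commute)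
    ultimately show ?thesis
      using v by (auto simp: sum_mult_unitv fiber_inequalities_def)
  qed
  ultimately show "v \<in> cone_fibers n r" by simp
qed

lemma cone_fibers_eq_fiber_inequalities:
  assumes "r \<ge> 1"
  shows "cone_fibers n r = fiber_inequalities n r"
  using fiber_inequalities_subset_cone_fibers[OF assms] gen_cone_subset_fiber_inequalities
    fiber_gens_subset_fiber_inequalities
  unfolding cone_fibers_eq_gen_cone by blast

section \<open>Effective divisors on the blow-up\<close>

lemma mult_ge_indicator:
  assumes "\<And>i. i \<in> I \<Longrightarrow> form_eval n a c (\<lambda>j. x (i, j)) = 0"
  shows "mult_ge n a c (\<lambda>j. x (i, j)) (if i \<in> I then 1 else 0)"
proof (cases "i \<in> I")
  case True
  show ?thesis
    unfolding if_P[OF True] by (intro mult_ge_1_if_form_eval_eq_0 assms True)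
next
  case False
  show ?thesis
    unfolding if_not_P[OF False] by (rule mult_ge_0)
qed

definition divisor_class :: "nat \<Rightarrow> nat \<Rightarrow> (nat \<Rightarrow> nat) \<Rightarrow> (nat \<Rightarrow> nat) \<Rightarrow> nat \<Rightarrow> real" where
  "divisor_class n r a m = (\<lambda>k. if k < n then real (a k) else if k < n + r then - real (m (k - n)) else 0)"

lemma sum_divisor_class_fibers: "(\<Sum>j<n. divisor_class n r a m j) = real (\<Sum>j<n. a j)"
  by (simp add: divisor_class_def)

lemma sum_divisor_class_exceptional:
  assumes "S \<subseteq> {..<r}"
  shows "(\<Sum>i\<in>S. divisor_class n r a m (n + i)) = - real (\<Sum>i\<in>S. m i)"
proof -
  have "(\<Sum>i\<in>S. divisor_class n r a m (n + i)) = (\<Sum>i\<in>S. - real (m i))"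
    using assms by (intro sum.cong) (auto simp: divisor_class_def)
  then show ?thesis by (simp add: sum_negf)
qed

lemma divisor_class_in_eff_gens:
  assumes "\<exists>e\<in>exps n a. c e \<noteq> 0" and "\<forall>i<r. mult_ge n a c (\<lambda>j. x (i, j)) (m i)"
  shows "divisor_class n r a m \<in> eff_gens n r x"
  unfolding eff_gens_def divisor_class_def
  by (intro UnI2 CollectI exI[of _ a] exI[of _ m] exI[of _ c] conjI assms refl)

lemma eff_gensE:
  assumes "v \<in> eff_gens n r x"
  obtains (exceptional) i where "i < r" "v = unitv (n + i)"
  | (divisor) a m c where "\<exists>e\<in>exps n a. c e \<noteq> 0" "\<forall>i<r. mult_ge n a c (\<lambda>j. x (i, j)) (m i)"
      "v = divisor_class n r a m"
  using assms unfolding eff_gens_def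
proof (elim UnE CollectE exE conjE)
  fix i assume "v = unitv (n + i)" "i < r"
  then show thesis by (rule exceptional[rotated])
next
  fix a m c assume "\<exists>e\<in>exps n a. c e \<noteq> 0" "\<forall>i<r. mult_ge n a c (\<lambda>j. x (i, j)) (m i)"
    "v = (\<lambda>k. if k < n then real (a k) else if k < n + r then - real (m (k - n)) else 0)"
  then show thesis by (intro divisor) (simp_all add: divisor_class_def)
qed

lemma fiber_gens_subset_eff_gens: "fiber_gens n r \<subseteq> eff_gens n r x"
proof
  fix g assume "g \<in> fiber_gens n r"
  then consider (exceptional) i where "i < r" "g = unitv (n + i)"
    | (fiber) j i where "j < n" "i < r" "g = (\<lambda>k. unitv j k - unitv (n + i) k)"
    unfolding fiber_gens_def by blast
  then show "g \<in> eff_gens n r x"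
  proof cases
    case exceptional
    then show ?thesis unfolding eff_gens_def by blast
  next
    case fiber
    define a where "a l = (if l = j then 1 else 0 :: nat)" for l
    define m where "m i' = (if i' \<in> {i} then 1 else 0 :: nat)" for i'
    define c where "c = linear_product n a (\<lambda>l. x (i, l))"
    have "form_eval n a c z = z j - x (i, j)" for z
    proof -
      have "(\<Prod>l<n. (z l - x (i, l)) ^ a l) = (\<Prod>l<n. if l = j then z l - x (i, l) else 1)"
        by (intro prod.cong) (auto simp: a_def)
      then show ?thesis
        using fiber(1) by (simp add: c_def form_eval_linear_product a_def)
    qed
    then have "form_eval n a c (\<lambda>l. x (i, l) + 1) \<noteq> 0"
      and "\<And>i'. i' \<in> {i} \<Longrightarrow> form_eval n a c (\<lambda>l. x (i', l)) = 0"
      by simp_all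
    then have "\<exists>e\<in>exps n a. c e \<noteq> 0" and "\<forall>i'<r. mult_ge n a c (\<lambda>l. x (i', l)) (m i')"
      unfolding m_def by (blast intro: coeff_nonzero_if_form_eval_nonzero mult_ge_indicator)+
    then have "divisor_class n r a m \<in> eff_gens n r x"
      by (rule divisor_class_in_eff_gens)
    moreover have "divisor_class n r a m k = g k" for k
      using fiber by (cases "k < n") (auto simp: divisor_class_def unitv_def a_def m_def)
    ultimately show ?thesis by (metis ext)
  qed
qed

lemma fiber_generated_iff_eff_gens_subset:
  assumes "r \<ge> 1"
  shows "fiber_generated n r x \<longleftrightarrow> eff_gens n r x \<subseteq> fiber_inequalities n r"
proof -
  have "cone_fibers n r \<subseteq> gen_cone (eff_gens n r x)"
    unfolding cone_fibers_eq_gen_cone by (intro gen_cone_mono fiber_gens_subset_eff_gens)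
  moreover have "gen_cone (eff_gens n r x) \<subseteq> pseff n r x"
    unfolding pseff_def by (rule closure_subset)
  moreover have "pseff n r x \<subseteq> fiber_inequalities n r" if "eff_gens n r x \<subseteq> fiber_inequalities n r"
    unfolding pseff_def using that
    by (intro closure_minimal closed_fiber_inequalities gen_cone_subset_fiber_inequalities)
  ultimately show ?thesis
    unfolding fiber_generated_def cone_fibers_eq_fiber_inequalities[OF assms]
    using gen_cone_inc by blast
qed

definition coords_distinct :: "nat \<Rightarrow> nat \<Rightarrow> (nat \<times> nat \<Rightarrow> complex) \<Rightarrow> bool" where
  "coords_distinct n r x \<longleftrightarrow> (\<forall>i<r. \<forall>i'<r. i \<noteq> i' \<longrightarrow> (\<forall>j<n. x (i, j) \<noteq> x (i', j)))"

lemma sum_multiplicities_le_degree: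
  assumes "coords_distinct n r x" and "r \<le> 2"
    and "\<exists>e\<in>exps n a. c e \<noteq> 0" and "\<forall>i<r. mult_ge n a c (\<lambda>j. x (i, j)) (m i)"
  shows "(\<Sum>i<r. m i) \<le> (\<Sum>j<n. a j)"
proof -
  consider "r = 0" | "r = 1" | "r = 2" using assms(2) by linarith
  then show ?thesis
  proof cases
    case 1
    then show ?thesis by simp
  next
    case 2
    \<comment> \<open>compare the single point with any point off it, where the multiplicity 0 is trivial\<close>
    have "m 0 + 0 \<le> (\<Sum>j<n. a j)"
      using assms(3,4) 2 mult_ge_0
      by (intro mult_ge_add_le_degree[where p = "\<lambda>j. x (0, j)" and q = "\<lambda>j. x (0, j) + 1"]) auto
    then show ?thesis using 2 by simp
  next
    case 3
    have "m 0 + m 1 \<le> (\<Sum>j<n. a j)"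
      using assms(1,3,4) 3
      by (intro mult_ge_add_le_degree[where p = "\<lambda>j. x (0, j)" and q = "\<lambda>j. x (1, j)"])
        (auto simp: coords_distinct_def)
    then show ?thesis using 3 by (simp add: numeral_2_eq_2)
  qed
qed

lemma eff_gens_subset_fiber_inequalities:
  assumes "coords_distinct n r x" and "r \<le> 2"
  shows "eff_gens n r x \<subseteq> fiber_inequalities n r"
proof
  fix v assume "v \<in> eff_gens n r x"
  then show "v \<in> fiber_inequalities n r"
  proof (cases rule: eff_gensE)
    case exceptional
    then show ?thesis
      by (auto simp: fiber_inequalities_def unitv_def intro!: sum_nonneg add_nonneg_nonneg)
  next
    case (divisor a m c)
    have "0 \<le> (\<Sum>j<n. v j) + (\<Sum>i\<in>S. v (n + i))" if "S \<subseteq> {..<r}" for S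
    proof -
      have "(\<Sum>i\<in>S. m i) \<le> (\<Sum>i<r. m i)"
        using that by (intro sum_mono2) auto
      also have "\<dots> \<le> (\<Sum>j<n. a j)"
        using assms divisor(1,2) by (rule sum_multiplicities_le_degree)
      finally have "real (\<Sum>i\<in>S. m i) \<le> real (\<Sum>j<n. a j)" by linarith
      then show ?thesis
        unfolding divisor(3) sum_divisor_class_fibers sum_divisor_class_exceptional[OF that] by simp
    qed
    then show ?thesis
      by (auto simp: fiber_inequalities_def divisor(3) divisor_class_def)
  qed
qed

lemma form_through_three_points:
  fixes P Q T :: "nat \<Rightarrow> complex"
  assumes "n \<ge> 2" and "P 0 \<noteq> Q 0" "P 1 \<noteq> Q 1" "T 0 \<noteq> Q 0" "T 1 \<noteq> P 1"
  defines "a \<equiv> \<lambda>l. if l < 2 then 1 else 0 :: nat"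
  obtains c where "\<exists>e\<in>exps n a. c e \<noteq> 0"
    and "form_eval n a c P = 0" "form_eval n a c Q = 0" "form_eval n a c T = 0"
proof -
  have prod_a: "(\<Prod>l<n. (z l - w l) ^ a l) = (z 0 - w 0) * (z 1 - w 1)" for z w :: "nat \<Rightarrow> complex"
  proof -
    have "(\<Prod>l<n. (z l - w l) ^ a l) = (\<Prod>l<2. z l - w l)"
      using assms(1) by (intro prod.mono_neutral_cong_right) (auto simp: a_def)
    then show ?thesis by (simp add: numeral_2_eq_2)
  qed
  \<comment> \<open>both products vanish at P and Q; the weights A and B make the sum vanish at T\<close>
  define A where "A = (T 0 - Q 0) * (T 1 - P 1)"
  define B where "B = - (T 0 - P 0) * (T 1 - Q 1)"
  define c where "c e = A * linear_product n a (\<lambda>l. if l = 0 then P 0 else Q 1) e +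
    B * linear_product n a (\<lambda>l. if l = 0 then Q 0 else P 1) e" for e
  have F: "form_eval n a c z = A * (z 0 - P 0) * (z 1 - Q 1) + B * (z 0 - Q 0) * (z 1 - P 1)" for z
    unfolding c_def form_eval_linear_comb
    by (simp add: form_eval_linear_product a_def prod_a[unfolded a_def])
  have "form_eval n a c (\<lambda>l. if l = 0 then Q 0 else P 1) \<noteq> 0"
    using assms(2-5) by (simp add: F A_def)
  then have "\<exists>e\<in>exps n a. c e \<noteq> 0"
    by (rule coeff_nonzero_if_form_eval_nonzero)
  moreover have "form_eval n a c P = 0" "form_eval n a c Q = 0" "form_eval n a c T = 0"
    by (simp_all add: F A_def B_def algebra_simps)
  ultimately show ?thesis by (rule that)
qed

lemma not_eff_gens_subset_fiber_inequalities:
  assumes "coords_distinct n r x" and "n \<ge> 2" and "r \<ge> 3"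
  shows "\<not> eff_gens n r x \<subseteq> fiber_inequalities n r"
proof
  assume subset: "eff_gens n r x \<subseteq> fiber_inequalities n r"
  define a where "a = (\<lambda>l::nat. if l < 2 then 1 else 0 :: nat)"
  define m where "m i = (if i \<in> {..<3} then 1 else 0 :: nat)" for i :: nat
  have distinct: "x (i, j) \<noteq> x (i', j)" if "i < r" "i' < r" "i \<noteq> i'" "j < n" for i i' j
    using assms(1) that unfolding coords_distinct_def by blast
  have "x (0, 0) \<noteq> x (1, 0)" "x (0, 1) \<noteq> x (1, 1)" "x (2, 0) \<noteq> x (1, 0)" "x (2, 1) \<noteq> x (0, 1)"
    using distinct assms(2,3) by simp_all
  then obtain c where c: "\<exists>e\<in>exps n a. c e \<noteq> 0"
    "form_eval n a c (\<lambda>j. x (0, j)) = 0" "form_eval n a c (\<lambda>j. x (1, j)) = 0"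
    "form_eval n a c (\<lambda>j. x (2, j)) = 0"
    by (rule form_through_three_points[OF assms(2), folded a_def])
  have "form_eval n a c (\<lambda>j. x (i, j)) = 0" if "i \<in> {..<3}" for i
  proof -
    have "i = 0 \<or> i = 1 \<or> i = 2" using that by auto
    then show ?thesis using c(2-4) by auto
  qed
  then have "\<forall>i<r. mult_ge n a c (\<lambda>j. x (i, j)) (m i)"
    unfolding m_def by (blast intro: mult_ge_indicator)
  then have "divisor_class n r a m \<in> fiber_inequalities n r"
    using subset divisor_class_in_eff_gens[OF c(1)] by blast
  then have "0 \<le> real (\<Sum>j<n. a j) - real (\<Sum>i<r. m i)"
    by (simp add: fiber_inequalities_def sum_divisor_class_fibers sum_divisor_class_exceptional)
  moreover have "(\<Sum>j<n. a j) = 2"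
  proof -
    have "(\<Sum>j<n. a j) = (\<Sum>j<2::nat. 1)"
      using assms(2) by (intro sum.mono_neutral_cong_right) (auto simp: a_def)
    then show ?thesis by simp
  qed
  moreover have "(\<Sum>i<r. m i) = 3"
  proof -
    have "(\<Sum>i<r. m i) = (\<Sum>i<3::nat. 1)"
      using assms(3) by (intro sum.mono_neutral_cong_right) (auto simp: m_def)
    then show ?thesis by simp
  qed
  ultimately show False by simp
qed

section \<open>Very general points\<close>

lemma very_general_mono:
  assumes "very_general V P" and "\<And>x. P x \<Longrightarrow> Q x"
  shows "very_general V Q"
  using assms unfolding very_general_def by blast

lemma very_general_Ball:
  assumes "countable I" and "\<And>i. i \<in> I \<Longrightarrow> very_general V (P i)"
  shows "very_general V (\<lambda>x. \<forall>i\<in>I. P i x)"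
proof -
  obtain F where F: "\<forall>i\<in>I. countable (F i) \<and> (\<forall>(S, c)\<in>F i. mpoly_nonzero V S c) \<and>
      (\<forall>x. (\<forall>(S, c)\<in>F i. mpoly_eval V S c x \<noteq> 0) \<longrightarrow> P i x)"
    using assms(2) unfolding very_general_def by metis
  show ?thesis
    unfolding very_general_def using assms(1) F
    by (intro exI[of _ "\<Union>i\<in>I. F i"]) auto
qed

lemma very_general_var_neq:
  fixes u w :: 'v
  assumes "finite V" and "u \<in> V" "w \<in> V" "u \<noteq> w"
  shows "very_general V (\<lambda>x. x u \<noteq> x w)"
proof -
  define d where "d y = (\<lambda>v. if v = y then 1 else 0 :: nat)" for y :: 'v
  define c where "c e = (if e = d u then 1 else if e = d w then - 1 else 0 :: complex)" for e
  have "d u u \<noteq> d w u"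
    using assms(4) by (simp add: d_def)
  then have "d u \<noteq> d w" by metis
  have monomial: "(\<Prod>v\<in>V. x v ^ d y v) = x y" if "y \<in> V" for x :: "'v \<Rightarrow> complex" and y
  proof -
    have "(\<Prod>v\<in>V. x v ^ d y v) = (\<Prod>v\<in>V. if v = y then x v else 1)"
      by (intro prod.cong) (auto simp: d_def)
    then show ?thesis using assms(1) that by simp
  qed
  have "mpoly_eval V {d u, d w} c x = x u - x w" for x
    using \<open>d u \<noteq> d w\<close> assms(2,3) by (simp add: mpoly_eval_def c_def monomial)
  moreover have "mpoly_nonzero V {d u, d w} c"
    using assms(1-3) by (auto simp: mpoly_nonzero_def c_def d_def)
  ultimately show ?thesis
    unfolding very_general_def by (intro exI[of _ "{({d u, d w}, c)}"]) auto
qed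

lemma very_general_coords_distinct: "very_general ({..<r} \<times> {..<n}) (coords_distinct n r)"
proof -
  define W where "W = {p \<in> ({..<r} \<times> {..<n}) \<times> ({..<r} \<times> {..<n}). fst p \<noteq> snd p}"
  have "countable W"
    unfolding W_def by (intro countable_finite finite_Collect_conjI) simp
  then have "very_general ({..<r} \<times> {..<n}) (\<lambda>x. \<forall>p\<in>W. x (fst p) \<noteq> x (snd p))"
    by (intro very_general_Ball very_general_var_neq) (auto simp: W_def)
  then show ?thesis
    by (rule very_general_mono) (force simp: coords_distinct_def W_def)
qed

theorem corollary2p6:
  fixes n r :: nat
  assumes "n \<ge> 2" and "r \<ge> 1"
  shows "very_general ({..<r} \<times> {..<n})
           (\<lambda>x. fiber_generated n r x \<longleftrightarrow> r \<le> 2)"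
proof (rule very_general_mono[OF very_general_coords_distinct])
  fix x assume "coords_distinct n r x"
  then show "fiber_generated n r x \<longleftrightarrow> r \<le> 2"
    using fiber_generated_iff_eff_gens_subset[OF assms(2)] eff_gens_subset_fiber_inequalities
      not_eff_gens_subset_fiber_inequalities[OF _ assms(1)] by (cases "r \<le> 2") auto
qed

end
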